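(* Let $M$ and $M'$ be two stable matchings in an instance $I$ of SPA-S, and let $M^\lor$ be the assignment defined from $M,M'$ in the context. Then $M^\lor$ is a matching.
   Context: An instance $I$ of SPA-S consists of a finite set $\mathcal{S}$ of students, a finite set $\mathcal{P}$ of projects and a finite set $\mathcal{L}$ of lecturers. Each student $s_i$ ranks a subset $A_i\subseteq\mathcal{P}$ (its acceptable projects) in strict order. Each project is offered by exactly one lecturer; lecturer $l_k$ offers a nonempty set $P_k\subseteq\mathcal{P}$, the $P_k$ partitioning $\mathcal{P}$. Each lecturer $l_k$ ranks in strict order the students who find at least one project of $P_k$ acceptable. Projects have capacities $c_j\in\mathbb{Z}^+$, lecturers have capacities $d_k\in\mathbb{Z}^+$ with $\max\{c_j:p_j\in P_k\}\le d_k\le\sum\{c_j:p_j\in P_k\}$. A pair $(s_i,p_j)$, $p_j$ offered by $l_k$, is acceptable if $p_j\in A_i$ and $s_i$ is on $l_k$'s list. A matching $M$ is a set of acceptable pairs with each student in at most one pair, $|M(p_j)|\le c_j$, $|M(l_k)|\le d_k$, where for an assignment $M$ (a set of acceptable pairs), $M(s_i)$, $M(p_j)$, $M(l_k)$ denote the project of $s_i$, the students assigned to $p_j$, and the students assigned to projects of $l_k$. Undersubscribed/full means fewer than/exactly capacity many assigned students. An acceptable pair $(s_i,p_j)\notin M$ ($p_j$ offered by $l_k$) blocks $M$ if ($s_i$ is unassigned or prefers $p_j$ to $M(s_i)$) and one of: (P1) $p_j$ and $l_k$ undersubscribed; (P2) $p_j$ undersubscribed, $l_k$ full, $s_i\in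 M(l_k)$; (P3) $p_j$ undersubscribed, $l_k$ full, $l_k$ prefers $s_i$ to the worst student of $M(l_k)$; (P4) $p_j$ full and $l_k$ prefers $s_i$ to the worst student of $M(p_j)$. $M$ is stable if it has no blocking pair. Given stable matchings $M,M'$, $M^\lor$ is the assignment in which each student unassigned in both $M$ and $M'$ is unassigned, each student assigned to the same project in both is assigned to that project, and every other student is assigned to the worse (in her preference) of her projects in $M$ and $M'$. *)

theory Defs
  imports Main
begin

record ('s,'p,'l) spa =
  studs :: "'s set"
  projs :: "'p set"
  lecs :: "'l set"
  accp :: "'s \<Rightarrow> 'p set"
  sprf :: "'s \<Rightarrow> 'p \<Rightarrow> 'p \<Rightarrow> bool"       (* sprf I s p q: s prefers p to q *)
  offerer :: "'p \<Rightarrow> 'l"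
  lprf :: "'l \<Rightarrow> 's \<Rightarrow> 's \<Rightarrow> bool"       (* lprf I l s t: l prefers s to t *)
  pcap :: "'p \<Rightarrow> nat"
  lcap :: "'l \<Rightarrow> nat"

definition strict_order_on :: "'a set \<Rightarrow> ('a \<Rightarrow> 'a \<Rightarrow> bool) \<Rightarrow> bool" where
  "strict_order_on X R \<longleftrightarrow>
     (\<forall>x. \<not> R x x) \<and> (\<forall>x y z. R x y \<longrightarrow> R y z \<longrightarrow> R x z) \<and>
     (\<forall>x\<in>X. \<forall>y\<in>X. x \<noteq> y \<longrightarrow> R x y \<or> R y x) \<and> (\<forall>x y. R x y \<longrightarrow> x \<in> X \<and> y \<in> X)"

definition offered :: "('s,'p,'l) spa \<Rightarrow> 'l \<Rightarrow> 'p set" where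
  "offered I l = {p \<in> projs I. offerer I p = l}"

definition lec_list :: "('s,'p,'l) spa \<Rightarrow> 'l \<Rightarrow> 's set" where
  "lec_list I l = {s \<in> studs I. accp I s \<inter> offered I l \<noteq> {}}"

definition valid_spa :: "('s,'p,'l) spa \<Rightarrow> bool" where
  "valid_spa I \<longleftrightarrow>
     finite (studs I) \<and> finite (projs I) \<and> finite (lecs I) \<and>
     (\<forall>s\<in>studs I. accp I s \<subseteq> projs I \<and> strict_order_on (accp I s) (sprf I s)) \<and>
     (\<forall>p\<in>projs I. offerer I p \<in> lecs I \<and> pcap I p \<ge> 1) \<and>
     (\<forall>l\<in>lecs I. offered I l \<noteq> {} \<and> strict_order_on (lec_list I l) (lprf I l) \<and>
        Max (pcap I ` offered I l) \<le> lcap I l \<and> lcap I l \<le> sum (pcap I) (offered I l))"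

definition acceptable :: "('s,'p,'l) spa \<Rightarrow> 's \<Rightarrow> 'p \<Rightarrow> bool" where
  "acceptable I s p \<longleftrightarrow> s \<in> studs I \<and> p \<in> accp I s \<and> s \<in> lec_list I (offerer I p)"

definition Mp :: "('s \<times> 'p) set \<Rightarrow> 'p \<Rightarrow> 's set" where
  "Mp M p = {s. (s,p) \<in> M}"

definition Ml :: "('s,'p,'l) spa \<Rightarrow> ('s \<times> 'p) set \<Rightarrow> 'l \<Rightarrow> 's set" where
  "Ml I M l = {s. \<exists>p. (s,p) \<in> M \<and> offerer I p = l}"

definition is_matching :: "('s,'p,'l) spa \<Rightarrow> ('s \<times> 'p) set \<Rightarrow> bool" where
  "is_matching I M \<longleftrightarrow>
     (\<forall>(s,p)\<in>M. acceptable I s p) \<and>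
     (\<forall>s p q. (s,p) \<in> M \<longrightarrow> (s,q) \<in> M \<longrightarrow> p = q) \<and>
     (\<forall>p\<in>projs I. card (Mp M p) \<le> pcap I p) \<and>
     (\<forall>l\<in>lecs I. card (Ml I M l) \<le> lcap I l)"

definition worst :: "('s,'p,'l) spa \<Rightarrow> 'l \<Rightarrow> 's set \<Rightarrow> 's" where
  "worst I l X = (THE t. t \<in> X \<and> (\<forall>u\<in>X. u \<noteq> t \<longrightarrow> lprf I l u t))"

definition blocks :: "('s,'p,'l) spa \<Rightarrow> ('s \<times> 'p) set \<Rightarrow> 's \<Rightarrow> 'p \<Rightarrow> bool" where
  "blocks I M s p \<longleftrightarrow>
     acceptable I s p \<and> (s,p) \<notin> M \<and>
     ((\<forall>q. (s,q) \<notin> M) \<or> (\<exists>q. (s,q) \<in> M \<and> sprf I s p q)) \<and>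
     (let l = offerer I p in
        (card (Mp M p) < pcap I p \<and> card (Ml I M l) < lcap I l) \<or>
        (card (Mp M p) < pcap I p \<and> card (Ml I M l) = lcap I l \<and> s \<in> Ml I M l) \<or>
        (card (Mp M p) < pcap I p \<and> card (Ml I M l) = lcap I l \<and>
           lprf I l s (worst I l (Ml I M l))) \<or>
        (card (Mp M p) = pcap I p \<and> lprf I l s (worst I l (Mp M p))))"

definition stable :: "('s,'p,'l) spa \<Rightarrow> ('s \<times> 'p) set \<Rightarrow> bool" where
  "stable I M \<longleftrightarrow> is_matching I M \<and> \<not> (\<exists>s p. blocks I M s p)"

definition join :: "('s,'p,'l) spa \<Rightarrow> ('s \<times> 'p) set \<Rightarrow> ('s \<times> 'p) set \<Rightarrow> ('s \<times> 'p) set" where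
  "join I M M' =
     {(s,p). (s,p) \<in> M \<and> (s,p) \<in> M'} \<union>
     {(s,p). (s,p) \<in> M \<and> (\<exists>q. (s,q) \<in> M' \<and> sprf I s q p)} \<union>
     {(s,p). (s,p) \<in> M' \<and> (\<exists>q. (s,q) \<in> M \<and> sprf I s q p)}"

end

theory Submission
  imports Defs
begin

text \<open>
  Call a student M-preferring if she is assigned in M and either unassigned in M' or
  prefers her M-project to her M'-project. On a project q the join keeps the students
  common to M(q) and M'(q), the students of M(q) - M'(q) that are not M-preferring, and
  the students of M'(q) - M(q) that are. Each M-preferring student leaves exactly one
  project when passing from M to M' and enters at most one, so overall at most as many
  M-preferring students are gained as are lost. Stability gives the reverse inequality
  for every lecturer l: either some project of l is undersubscribed in M' although it
  lost an M-preferring student, and then l is full in M' and no project of l gains more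
  other students than it loses; or every project of l gains at least as many
  M-preferring students as it loses. Hence all these inequalities are equalities, and on
  the projects of each lecturer the join is bounded project-wise by M or by M'.
\<close>

lemma strict_order_on_irrefl: "strict_order_on X R \<Longrightarrow> \<not> R x x"
  unfolding strict_order_on_def by blast

lemma strict_order_on_trans: "strict_order_on X R \<Longrightarrow> R x y \<Longrightarrow> R y z \<Longrightarrow> R x z"
  unfolding strict_order_on_def by blast

lemma strict_order_on_asym: "strict_order_on X R \<Longrightarrow> R x y \<Longrightarrow> \<not> R y x"
  unfolding strict_order_on_def by blast

lemma strict_order_on_total:
  "strict_order_on X R \<Longrightarrow> x \<in> X \<Longrightarrow> y \<in> X \<Longrightarrow> x \<noteq> y \<Longrightarrow> R x y \<or> R y x"
  unfolding strict_order_on_def by blast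

lemma strict_order_on_ex1_bottom:
  assumes R: "strict_order_on X R" and "finite Z" "Z \<noteq> {}" "Z \<subseteq> X"
  shows "\<exists>!t. t \<in> Z \<and> (\<forall>u\<in>Z. u \<noteq> t \<longrightarrow> R u t)"
proof -
  have "\<exists>t. t \<in> Z \<and> (\<forall>u\<in>Z. u \<noteq> t \<longrightarrow> R u t)"
    using assms(2-4)
  proof (induction Z rule: finite_ne_induct)
    case (singleton x)
    then show ?case by auto
  next
    case (insert x F)
    then obtain t where t: "t \<in> F" "\<forall>u\<in>F. u \<noteq> t \<longrightarrow> R u t" by auto
    have "R x t \<or> R t x"
      using strict_order_on_total[OF R] insert t by (metis insert_subset subsetD)
    then show ?case
    proof
      assume "R x t"
      then show ?thesis using t by auto
    next
      assume "R t x"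
      then have "\<forall>u\<in>F. R u x"
        using t strict_order_on_trans[OF R] by metis
      then show ?thesis by auto
    qed
  qed
  then show ?thesis
  proof (rule ex_ex1I)
    fix t t' assume "t \<in> Z \<and> (\<forall>u\<in>Z. u \<noteq> t \<longrightarrow> R u t)" "t' \<in> Z \<and> (\<forall>u\<in>Z. u \<noteq> t' \<longrightarrow> R u t')"
    then have "t \<noteq> t' \<Longrightarrow> R t t' \<and> R t' t" by auto
    then show "t = t'"
      using strict_order_on_asym[OF R] by blast
  qed
qed

lemma
  assumes "strict_order_on Y (lprf I l)" "finite Z" "Z \<noteq> {}" "Z \<subseteq> Y"
  shows worst_in: "worst I l Z \<in> Z"
    and lprf_worst: "\<And>u. u \<in> Z \<Longrightarrow> u \<noteq> worst I l Z \<Longrightarrow> lprf I l u (worst I l Z)"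
  using theI'[OF strict_order_on_ex1_bottom[OF assms]] unfolding worst_def by auto

lemma lprf_member_if_not_lprf_worst:
  assumes R: "strict_order_on Y (lprf I l)" and Z: "finite Z" "Z \<subseteq> Y"
    and x: "x \<in> Y" "x \<notin> Z" "\<not> lprf I l x (worst I l Z)" and u: "u \<in> Z"
  shows "lprf I l u x"
proof -
  have ne: "Z \<noteq> {}" using u by blast
  have "lprf I l (worst I l Z) x"
    using strict_order_on_total[OF R] worst_in[OF R Z(1) ne Z(2)] Z(2) x by blast
  then show ?thesis
    using lprf_worst[OF R Z(1) ne Z(2)] u strict_order_on_trans[OF R] by metis
qed

lemma acceptableD:
  assumes "valid_spa I" "acceptable I s p"
  shows "s \<in> studs I" "p \<in> accp I s" "p \<in> projs I" "s \<in> lec_list I (offerer I p)"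
proof -
  show s: "s \<in> studs I" and p: "p \<in> accp I s" "s \<in> lec_list I (offerer I p)"
    using assms(2) unfolding acceptable_def by blast+
  show "p \<in> projs I"
    using assms(1) s p(1) unfolding valid_spa_def by blast
qed

lemma valid_spa_offerer: "valid_spa I \<Longrightarrow> p \<in> projs I \<Longrightarrow> offerer I p \<in> lecs I"
  unfolding valid_spa_def by blast

lemma valid_spa_lprf: "valid_spa I \<Longrightarrow> l \<in> lecs I \<Longrightarrow> strict_order_on (lec_list I l) (lprf I l)"
  unfolding valid_spa_def by blast

lemma valid_spa_sprf: "valid_spa I \<Longrightarrow> s \<in> studs I \<Longrightarrow> strict_order_on (accp I s) (sprf I s)"
  unfolding valid_spa_def by blast

lemma finite_lec_list: "valid_spa I \<Longrightarrow> finite (lec_list I l)"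
  unfolding valid_spa_def lec_list_def by simp

lemma finite_offered: "valid_spa I \<Longrightarrow> finite (offered I l)"
  unfolding valid_spa_def offered_def by simp

lemma sum_offered_regroup:
  assumes "valid_spa I"
  shows "(\<Sum>l\<in>lecs I. \<Sum>q\<in>offered I l. f q) = (\<Sum>q\<in>projs I. f q)"
  unfolding offered_def
  by (rule sum.group) (use assms in \<open>auto simp: valid_spa_def\<close>)

lemma matching_acceptable: "is_matching I N \<Longrightarrow> (s,p) \<in> N \<Longrightarrow> acceptable I s p"
  unfolding is_matching_def by blast

lemma matching_unique: "is_matching I N \<Longrightarrow> (s,p) \<in> N \<Longrightarrow> (s,q) \<in> N \<Longrightarrow> p = q"
  unfolding is_matching_def by blast

lemma matching_pcap: "is_matching I N \<Longrightarrow> p \<in> projs I \<Longrightarrow> card (Mp N p) \<le> pcap I p"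
  unfolding is_matching_def by blast

lemma matching_lcap: "is_matching I N \<Longrightarrow> l \<in> lecs I \<Longrightarrow> card (Ml I N l) \<le> lcap I l"
  unfolding is_matching_def by blast

lemma Mp_subset_Ml: "Mp N p \<subseteq> Ml I N (offerer I p)"
  unfolding Mp_def Ml_def by blast

lemma matching_Ml_subset_lec_list:
  "valid_spa I \<Longrightarrow> is_matching I N \<Longrightarrow> Ml I N l \<subseteq> lec_list I l"
  unfolding Ml_def using acceptableD(4) matching_acceptable by fastforce

lemma matching_finite_Ml: "valid_spa I \<Longrightarrow> is_matching I N \<Longrightarrow> finite (Ml I N l)"
  by (rule finite_subset[OF matching_Ml_subset_lec_list finite_lec_list])

lemma matching_finite_Mp: "valid_spa I \<Longrightarrow> is_matching I N \<Longrightarrow> finite (Mp N p)"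
  by (rule finite_subset[OF Mp_subset_Ml matching_finite_Ml])

lemma Ml_eq_UN_Mp:
  "(\<And>s p. (s,p) \<in> N \<Longrightarrow> p \<in> projs I) \<Longrightarrow> Ml I N l = (\<Union>q\<in>offered I l. Mp N q)"
  unfolding Ml_def Mp_def offered_def by blast

lemma matching_card_Ml:
  assumes V: "valid_spa I" and N: "is_matching I N"
  shows "card (Ml I N l) = (\<Sum>q\<in>offered I l. card (Mp N q))"
proof -
  have "Ml I N l = (\<Union>q\<in>offered I l. Mp N q)"
    using Ml_eq_UN_Mp acceptableD(3)[OF V] matching_acceptable[OF N] by metis
  moreover have "card (\<Union>q\<in>offered I l. Mp N q) = (\<Sum>q\<in>offered I l. card (Mp N q))"
  proof (rule card_UN_disjoint)
    show "finite (offered I l)" using finite_offered[OF V] .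
    show "\<forall>q\<in>offered I l. finite (Mp N q)" using matching_finite_Mp[OF V N] by blast
    show "\<forall>q\<in>offered I l. \<forall>q'\<in>offered I l. q \<noteq> q' \<longrightarrow> Mp N q \<inter> Mp N q' = {}"
      using matching_unique[OF N] unfolding Mp_def by blast
  qed
  ultimately show ?thesis by simp
qed

definition prefers_to_assigned :: "('s,'p,'l) spa \<Rightarrow> ('s \<times> 'p) set \<Rightarrow> 's \<Rightarrow> 'p \<Rightarrow> bool" where
  "prefers_to_assigned I N s p \<longleftrightarrow> (\<forall>q. (s,q) \<notin> N) \<or> (\<exists>q. (s,q) \<in> N \<and> sprf I s p q)"

lemma stable_incumbents_preferred:
  assumes V: "valid_spa I" and S: "stable I N" and acc: "acceptable I s p"
    and notin: "(s,p) \<notin> N" and pref: "prefers_to_assigned I N s p"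
  defines "l \<equiv> offerer I p"
  shows "\<forall>u\<in>Mp N p. lprf I l u s"
    and "card (Mp N p) < pcap I p \<Longrightarrow> card (Ml I N l) = lcap I l \<and> (\<forall>u\<in>Ml I N l. lprf I l u s)"
proof -
  have N: "is_matching I N" using S unfolding stable_def by blast
  have p: "p \<in> projs I" and s: "s \<in> lec_list I l"
    using acceptableD[OF V acc] unfolding l_def by blast+
  have l: "l \<in> lecs I" using valid_spa_offerer[OF V p] unfolding l_def .
  note R = valid_spa_lprf[OF V l]
  have Ml: "finite (Ml I N l)" "Ml I N l \<subseteq> lec_list I l"
    using matching_finite_Ml[OF V N] matching_Ml_subset_lec_list[OF V N] by blast+
  have Mp_Ml: "Mp N p \<subseteq> Ml I N l" unfolding l_def by (rule Mp_subset_Ml)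
  then have Mp: "finite (Mp N p)" "Mp N p \<subseteq> lec_list I l"
    using Ml finite_subset by blast+
  have "\<not> blocks I N s p" using S unfolding stable_def by blast
  then have no_block:
    "\<not> (card (Mp N p) < pcap I p \<and> card (Ml I N l) < lcap I l)"
    "\<not> (card (Mp N p) < pcap I p \<and> card (Ml I N l) = lcap I l \<and> s \<in> Ml I N l)"
    "\<not> (card (Mp N p) < pcap I p \<and> card (Ml I N l) = lcap I l \<and> lprf I l s (worst I l (Ml I N l)))"
    "\<not> (card (Mp N p) = pcap I p \<and> lprf I l s (worst I l (Mp N p)))"
    using acc notin pref unfolding blocks_def prefers_to_assigned_def Let_def l_def by blast+
  show under: "card (Ml I N l) = lcap I l \<and> (\<forall>u\<in>Ml I N l. lprf I l u s)"
    if "card (Mp N p) < pcap I p"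
  proof
    show full: "card (Ml I N l) = lcap I l"
      using that no_block(1) matching_lcap[OF N l] by linarith
    show "\<forall>u\<in>Ml I N l. lprf I l u s"
      using lprf_member_if_not_lprf_worst[OF R Ml s] that full no_block(2,3) by blast
  qed
  show "\<forall>u\<in>Mp N p. lprf I l u s"
  proof (cases "card (Mp N p) < pcap I p")
    case True
    then show ?thesis using under Mp_Ml by blast
  next
    case False
    then have "card (Mp N p) = pcap I p" using matching_pcap[OF N p] by linarith
    moreover have "s \<notin> Mp N p" using notin unfolding Mp_def by blast
    ultimately show ?thesis
      using lprf_member_if_not_lprf_worst[OF R Mp s] no_block(4) by blast
  qed
qed

locale two_stable_matchings =
  fixes I :: "('s,'p,'l) spa" and M M' :: "('s \<times> 'p) set"
  assumes valid: "valid_spa I" and stable: "stable I M" and stable': "stable I M'"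
begin

lemma matching: "is_matching I M"
  using stable unfolding stable_def by blast

lemma matching': "is_matching I M'"
  using stable' unfolding stable_def by blast

definition prefers_M :: "'s set" where
  "prefers_M = {s. \<exists>q. (s,q) \<in> M \<and> (s,q) \<notin> M' \<and> prefers_to_assigned I M' s q}"

definition kept :: "'p \<Rightarrow> 's set" where
  "kept q = Mp M q \<inter> Mp M' q"

definition lost :: "'p \<Rightarrow> 's set" where
  "lost q = Mp M q - Mp M' q"

definition gained :: "'p \<Rightarrow> 's set" where
  "gained q = Mp M' q - Mp M q"

lemma card_Mp_M:
  "card (Mp M q) = card (kept q) + card (lost q \<inter> prefers_M) + card (lost q - prefers_M)"
proof -
  have fin: "finite (Mp M q)" using matching_finite_Mp[OF valid matching] .
  then have "finite (lost q)" unfolding lost_def by blast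
  then show ?thesis
    using card_Int_Diff[OF fin, of "Mp M' q"] card_Int_Diff[of "lost q" prefers_M]
    unfolding kept_def lost_def by linarith
qed

lemma card_Mp_M':
  "card (Mp M' q) = card (kept q) + card (gained q \<inter> prefers_M) + card (gained q - prefers_M)"
proof -
  have fin: "finite (Mp M' q)" using matching_finite_Mp[OF valid matching'] .
  then have "finite (gained q)" unfolding gained_def by blast
  then show ?thesis
    using card_Int_Diff[OF fin, of "Mp M q"] card_Int_Diff[of "gained q" prefers_M]
    unfolding kept_def gained_def by (simp add: Int_commute)
qed

lemma lost_prefers_M_pair:
  assumes "s \<in> lost q \<inter> prefers_M"
  shows "acceptable I s q" "(s,q) \<notin> M'" "prefers_to_assigned I M' s q"
proof -
  have sq: "(s,q) \<in> M" and "(s,q) \<notin> M'"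
    using assms unfolding lost_def Mp_def by blast+
  moreover obtain q' where "(s,q') \<in> M" "prefers_to_assigned I M' s q'"
    using assms unfolding prefers_M_def by blast
  ultimately show "acceptable I s q" "(s,q) \<notin> M'" "prefers_to_assigned I M' s q"
    using matching_acceptable[OF matching] matching_unique[OF matching] by metis+
qed

lemma gained_not_prefers_M_pair:
  assumes t: "t \<in> gained q - prefers_M"
  shows "acceptable I t q" "(t,q) \<notin> M" "prefers_to_assigned I M t q"
proof -
  have tq: "(t,q) \<in> M'" and not_tq: "(t,q) \<notin> M"
    using t unfolding gained_def Mp_def by blast+
  show acc: "acceptable I t q" using matching_acceptable[OF matching' tq] .
  show "(t,q) \<notin> M" using not_tq .
  show "prefers_to_assigned I M t q"
  proof (cases "\<exists>r. (t,r) \<in> M")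
    case False
    then show ?thesis unfolding prefers_to_assigned_def by blast
  next
    case True
    then obtain r where tr: "(t,r) \<in> M" by blast
    have rq: "r \<noteq> q" using tr not_tq by blast
    have "(t,r) \<notin> M'" using matching_unique[OF matching' tq] rq by blast
    with tr t have "\<not> prefers_to_assigned I M' t r" unfolding prefers_M_def by blast
    then have "\<not> sprf I t r q" using tq unfolding prefers_to_assigned_def by blast
    moreover have "r \<in> accp I t" "q \<in> accp I t"
      using acceptableD(2)[OF valid] matching_acceptable[OF matching tr] acc by blast+
    ultimately have "sprf I t q r"
      using strict_order_on_total[OF valid_spa_sprf[OF valid acceptableD(1)[OF valid acc]]] rq
      by blast
    then show ?thesis using tr unfolding prefers_to_assigned_def by blast
  qed
qed

lemma Mp_join_subset:
  "Mp (join I M M') q \<subseteq> kept q \<union> (lost q - prefers_M) \<union> (gained q \<inter> prefers_M)"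
proof
  fix s assume "s \<in> Mp (join I M M') q"
  then consider (both) "(s,q) \<in> M" "(s,q) \<in> M'"
    | (worse_in_M) r where "(s,q) \<in> M" "(s,r) \<in> M'" "sprf I s r q"
    | (worse_in_M') r where "(s,q) \<in> M'" "(s,r) \<in> M" "sprf I s r q"
    unfolding Mp_def join_def by blast
  then show "s \<in> kept q \<union> (lost q - prefers_M) \<union> (gained q \<inter> prefers_M)"
  proof cases
    case both
    then show ?thesis unfolding kept_def Mp_def by blast
  next
    case worse_in_M
    have "s \<in> studs I"
      using acceptableD(1)[OF valid matching_acceptable[OF matching worse_in_M(1)]] .
    note R = valid_spa_sprf[OF valid this]
    have "r \<noteq> q" using worse_in_M(3) strict_order_on_irrefl[OF R] by blast
    then have not_sq: "(s,q) \<notin> M'" using matching_unique[OF matching' worse_in_M(2)] by blast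
    have "s \<notin> prefers_M"
    proof
      assume "s \<in> prefers_M"
      then have "prefers_to_assigned I M' s q"
        using lost_prefers_M_pair(3) worse_in_M(1) not_sq unfolding lost_def Mp_def by blast
      then have "sprf I s q r"
        using worse_in_M(2) matching_unique[OF matching'] unfolding prefers_to_assigned_def by blast
      then show False using worse_in_M(3) strict_order_on_asym[OF R] by blast
    qed
    then show ?thesis using worse_in_M(1) not_sq unfolding lost_def Mp_def by blast
  next
    case worse_in_M'
    have "s \<in> studs I"
      using acceptableD(1)[OF valid matching_acceptable[OF matching worse_in_M'(2)]] .
    note R = valid_spa_sprf[OF valid this]
    have rq: "r \<noteq> q" using worse_in_M'(3) strict_order_on_irrefl[OF R] by blast
    then have "(s,q) \<notin> M" "(s,r) \<notin> M'"
      using matching_unique[OF matching worse_in_M'(2)] matching_unique[OF matching' worse_in_M'(1)]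
      by blast+
    moreover have "prefers_to_assigned I M' s r"
      using worse_in_M' unfolding prefers_to_assigned_def by blast
    ultimately show ?thesis
      using worse_in_M' unfolding gained_def Mp_def prefers_M_def by blast
  qed
qed

lemma card_Mp_join_le:
  "card (Mp (join I M M') q)
    \<le> card (kept q) + card (lost q - prefers_M) + card (gained q \<inter> prefers_M)"
proof -
  have fin: "finite (Mp M q)" "finite (Mp M' q)"
    using matching_finite_Mp[OF valid matching] matching_finite_Mp[OF valid matching'] .
  have "card (Mp (join I M M') q) \<le> card (kept q \<union> (lost q - prefers_M) \<union> (gained q \<inter> prefers_M))"
    using fin by (intro card_mono[OF _ Mp_join_subset]) (simp add: kept_def lost_def gained_def)
  also have "\<dots> \<le> card (kept q) + card (lost q - prefers_M) + card (gained q \<inter> prefers_M)"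
    by (meson add_right_mono card_Un_le order_trans)
  finally show ?thesis .
qed

lemma sum_card_gained_le_lost:
  "(\<Sum>q\<in>projs I. card (gained q \<inter> prefers_M)) \<le> (\<Sum>q\<in>projs I. card (lost q \<inter> prefers_M))"
proof -
  have fin: "finite (projs I)" using valid unfolding valid_spa_def by blast
  have fin_Mp: "finite (Mp N q)" if "is_matching I N" for N q
    using matching_finite_Mp[OF valid that] .
  have "(\<Sum>q\<in>projs I. card (gained q \<inter> prefers_M)) = card (\<Union>q\<in>projs I. gained q \<inter> prefers_M)"
    using fin fin_Mp[OF matching'] matching_unique[OF matching']
    by (intro card_UN_disjoint[symmetric]) (auto simp: gained_def Mp_def)
  also have "\<dots> \<le> card (\<Union>q\<in>projs I. lost q \<inter> prefers_M)"
  proof (rule card_mono)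
    show "finite (\<Union>q\<in>projs I. lost q \<inter> prefers_M)"
      using fin fin_Mp[OF matching] unfolding lost_def by blast
    show "(\<Union>q\<in>projs I. gained q \<inter> prefers_M) \<subseteq> (\<Union>q\<in>projs I. lost q \<inter> prefers_M)"
      using acceptableD(3)[OF valid] matching_acceptable[OF matching]
      unfolding prefers_M_def lost_def Mp_def by blast
  qed
  also have "\<dots> = (\<Sum>q\<in>projs I. card (lost q \<inter> prefers_M))"
    using fin fin_Mp[OF matching] matching_unique[OF matching]
    by (intro card_UN_disjoint) (auto simp: lost_def Mp_def)
  finally show ?thesis .
qed

lemma full_if_gained_outside_preferred:
  assumes t: "t \<in> gained q - prefers_M" and s: "s \<in> Ml I M (offerer I q)"
    and ts: "lprf I (offerer I q) t s"
  shows "card (Mp M q) = pcap I q" "\<forall>u\<in>Mp M q. lprf I (offerer I q) u t"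
proof -
  note pair = gained_not_prefers_M_pair[OF t]
  have q: "q \<in> projs I" using acceptableD(3)[OF valid pair(1)] .
  note R = valid_spa_lprf[OF valid valid_spa_offerer[OF valid q]]
  show "\<forall>u\<in>Mp M q. lprf I (offerer I q) u t"
    using stable_incumbents_preferred(1)[OF valid stable pair] .
  have "\<not> card (Mp M q) < pcap I q"
  proof
    assume "card (Mp M q) < pcap I q"
    then have "lprf I (offerer I q) s t"
      using stable_incumbents_preferred(2)[OF valid stable pair] s by blast
    then show False using ts strict_order_on_asym[OF R] by blast
  qed
  then show "card (Mp M q) = pcap I q" using matching_pcap[OF matching q] by linarith
qed

lemma card_lost_le_gained_if_full:
  assumes q: "q \<in> projs I" and full: "card (Mp M' q) = pcap I q"
  shows "card (lost q \<inter> prefers_M) \<le> card (gained q \<inter> prefers_M)"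
proof (cases "lost q \<inter> prefers_M = {}")
  case True
  then show ?thesis by simp
next
  case False
  then obtain s where s: "s \<in> lost q \<inter> prefers_M" by blast
  note R = valid_spa_lprf[OF valid valid_spa_offerer[OF valid q]]
  have s_Ml: "s \<in> Ml I M (offerer I q)" using s Mp_subset_Ml[of M q I] unfolding lost_def by blast
  have "card (gained q - prefers_M) = 0"
  proof (rule ccontr)
    assume "card (gained q - prefers_M) \<noteq> 0"
    then obtain t where t: "t \<in> gained q - prefers_M" by (metis card.empty equals0I)
    have "lprf I (offerer I q) t s"
      using stable_incumbents_preferred(1)[OF valid stable' lost_prefers_M_pair[OF s]] t
      unfolding gained_def by blast
    moreover from this have "lprf I (offerer I q) s t"
      using full_if_gained_outside_preferred(2)[OF t s_Ml] s unfolding lost_def by blast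
    ultimately show False using strict_order_on_asym[OF R] by blast
  qed
  then show ?thesis
    using card_Mp_M[of q] card_Mp_M'[of q] matching_pcap[OF matching q] full by linarith
qed

definition has_room :: "'l \<Rightarrow> bool" where
  "has_room l \<longleftrightarrow> (\<exists>q\<in>offered I l. card (Mp M' q) < pcap I q \<and> lost q \<inter> prefers_M \<noteq> {})"

lemma has_roomE:
  assumes "has_room l"
  obtains s where "s \<in> Ml I M l" "card (Ml I M' l) = lcap I l" "\<forall>u\<in>Ml I M' l. lprf I l u s"
proof -
  obtain q s where q: "q \<in> offered I l" "card (Mp M' q) < pcap I q" and s: "s \<in> lost q \<inter> prefers_M"
    using assms unfolding has_room_def by blast
  have l: "offerer I q = l" using q(1) unfolding offered_def by simp
  have "s \<in> Ml I M l" using s Mp_subset_Ml[of M q I] l unfolding lost_def by blast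
  moreover have "card (Ml I M' l) = lcap I l \<and> (\<forall>u\<in>Ml I M' l. lprf I l u s)"
    using stable_incumbents_preferred(2)[OF valid stable' lost_prefers_M_pair[OF s] q(2)] l by simp
  ultimately show ?thesis using that by blast
qed

lemma has_room_sum_Mp_le:
  assumes "has_room l" "l \<in> lecs I"
  shows "(\<Sum>q\<in>offered I l. card (Mp M q)) \<le> (\<Sum>q\<in>offered I l. card (Mp M' q))"
proof -
  obtain s where "card (Ml I M' l) = lcap I l" using has_roomE[OF assms(1)] .
  then show ?thesis
    using matching_lcap[OF matching assms(2)] matching_card_Ml[OF valid matching]
      matching_card_Ml[OF valid matching'] by simp
qed

lemma has_room_card_gained_le_lost:
  assumes room: "has_room l" and q: "q \<in> offered I l"
  shows "card (gained q - prefers_M) \<le> card (lost q - prefers_M)"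
proof (cases "gained q - prefers_M = {}")
  case True
  then show ?thesis by (simp add: True)
next
  case False
  then obtain t where t: "t \<in> gained q - prefers_M" by blast
  obtain s where s: "s \<in> Ml I M l" and M'_preferred: "\<forall>u\<in>Ml I M' l. lprf I l u s"
    using has_roomE[OF room] by blast
  have l: "offerer I q = l" "q \<in> projs I" using q unfolding offered_def by simp_all
  note R = valid_spa_lprf[OF valid valid_spa_offerer[OF valid l(2)]]
  have "lprf I l t s"
    using M'_preferred t Mp_subset_Ml[of M' q I] l(1) unfolding gained_def by blast
  then have full: "card (Mp M q) = pcap I q" and M_preferred: "\<forall>u\<in>Mp M q. lprf I l u t"
    using full_if_gained_outside_preferred[OF t] s l(1) by blast+
  have "card (lost q \<inter> prefers_M) = 0"
  proof (rule ccontr)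
    assume "card (lost q \<inter> prefers_M) \<noteq> 0"
    then obtain u where u: "u \<in> lost q \<inter> prefers_M" by (metis card.empty equals0I)
    have "lprf I l t u"
      using stable_incumbents_preferred(1)[OF valid stable' lost_prefers_M_pair[OF u]] t l(1)
      unfolding gained_def by blast
    moreover have "lprf I l u t" using M_preferred u unfolding lost_def by blast
    ultimately show False using strict_order_on_asym[OF R] l(1) by blast
  qed
  then show ?thesis
    using card_Mp_M[of q] card_Mp_M'[of q] matching_pcap[OF matching' l(2)] full by linarith
qed

lemma no_room_card_lost_le_gained:
  assumes "\<not> has_room l" and q: "q \<in> offered I l"
  shows "card (lost q \<inter> prefers_M) \<le> card (gained q \<inter> prefers_M)"
proof (cases "card (Mp M' q) < pcap I q")
  case True
  then have "lost q \<inter> prefers_M = {}" using assms unfolding has_room_def by blast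
  then show ?thesis by simp
next
  case False
  have "q \<in> projs I" using q unfolding offered_def by simp
  then show ?thesis
    using card_lost_le_gained_if_full False matching_pcap[OF matching'] le_neq_implies_less
    by blast
qed

lemma sum_card_lost_le_gained:
  assumes l: "l \<in> lecs I"
  shows "(\<Sum>q\<in>offered I l. card (lost q \<inter> prefers_M))
    \<le> (\<Sum>q\<in>offered I l. card (gained q \<inter> prefers_M))"
proof (cases "has_room l")
  case True
  have "(\<Sum>q\<in>offered I l. card (gained q - prefers_M))
      \<le> (\<Sum>q\<in>offered I l. card (lost q - prefers_M))"
    using has_room_card_gained_le_lost[OF True] by (rule sum_mono)
  then show ?thesis
    using has_room_sum_Mp_le[OF True l] by (simp add: card_Mp_M card_Mp_M' sum.distrib)
next
  case False
  show ?thesis using no_room_card_lost_le_gained[OF False] by (rule sum_mono)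
qed

lemma sum_card_lost_eq_gained:
  assumes l: "l \<in> lecs I"
  shows "(\<Sum>q\<in>offered I l. card (lost q \<inter> prefers_M))
    = (\<Sum>q\<in>offered I l. card (gained q \<inter> prefers_M))"
proof -
  have fin: "finite (lecs I)" using valid unfolding valid_spa_def by blast
  have "(\<Sum>l\<in>lecs I. \<Sum>q\<in>offered I l. card (gained q \<inter> prefers_M))
      \<le> (\<Sum>l\<in>lecs I. \<Sum>q\<in>offered I l. card (lost q \<inter> prefers_M))"
    using sum_card_gained_le_lost by (simp add: sum_offered_regroup[OF valid])
  moreover have "(\<Sum>l\<in>lecs I. \<Sum>q\<in>offered I l. card (lost q \<inter> prefers_M))
      \<le> (\<Sum>l\<in>lecs I. \<Sum>q\<in>offered I l. card (gained q \<inter> prefers_M))"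
    using sum_card_lost_le_gained by (rule sum_mono)
  ultimately have "(\<Sum>l\<in>lecs I. \<Sum>q\<in>offered I l. card (lost q \<inter> prefers_M))
      = (\<Sum>l\<in>lecs I. \<Sum>q\<in>offered I l. card (gained q \<inter> prefers_M))"
    by (rule antisym[rotated])
  then show ?thesis
    using sum_card_lost_le_gained l fin by (rule sum_mono_inv)
qed

lemma card_Mp_join_le_lecturer:
  assumes l: "l \<in> lecs I"
  shows "(\<forall>q\<in>offered I l. card (Mp (join I M M') q) \<le> card (Mp M q)) \<or>
         (\<forall>q\<in>offered I l. card (Mp (join I M M') q) \<le> card (Mp M' q))"
proof (cases "has_room l")
  case True
  note le = has_room_card_gained_le_lost[OF True]
  have "(\<Sum>q\<in>offered I l. card (lost q - prefers_M))
      \<le> (\<Sum>q\<in>offered I l. card (gained q - prefers_M))"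
    using has_room_sum_Mp_le[OF True l] sum_card_lost_eq_gained[OF l]
    by (simp add: card_Mp_M card_Mp_M' sum.distrib)
  moreover have "(\<Sum>q\<in>offered I l. card (gained q - prefers_M))
      \<le> (\<Sum>q\<in>offered I l. card (lost q - prefers_M))"
    using le by (rule sum_mono)
  ultimately have "(\<Sum>q\<in>offered I l. card (gained q - prefers_M))
      = (\<Sum>q\<in>offered I l. card (lost q - prefers_M))"
    by (rule antisym[rotated])
  then have eq: "card (gained q - prefers_M) = card (lost q - prefers_M)" if "q \<in> offered I l" for q
    using le that finite_offered[OF valid] by (rule sum_mono_inv)
  have "card (Mp (join I M M') q) \<le> card (Mp M' q)" if "q \<in> offered I l" for q
    using card_Mp_join_le[of q] card_Mp_M'[of q] eq[OF that] by linarith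
  then show ?thesis by blast
next
  case False
  note le = no_room_card_lost_le_gained[OF False]
  have eq: "card (lost q \<inter> prefers_M) = card (gained q \<inter> prefers_M)" if "q \<in> offered I l" for q
    using sum_card_lost_eq_gained[OF l] le that finite_offered[OF valid] by (rule sum_mono_inv)
  have "card (Mp (join I M M') q) \<le> card (Mp M q)" if "q \<in> offered I l" for q
    using card_Mp_join_le[of q] card_Mp_M[of q] eq[OF that] by linarith
  then show ?thesis by blast
qed

lemma join_subset: "join I M M' \<subseteq> M \<union> M'"
  unfolding join_def by blast

lemma join_unique:
  assumes "(s,p) \<in> join I M M'" "(s,q) \<in> join I M M'"
  shows "p = q"
proof -
  have "s \<in> studs I"
    using assms(1) join_subset acceptableD(1)[OF valid]
      matching_acceptable[OF matching] matching_acceptable[OF matching'] by blast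
  note R = valid_spa_sprf[OF valid this]
  show ?thesis
    using assms strict_order_on_asym[OF R]
      matching_unique[OF matching] matching_unique[OF matching']
    unfolding join_def by blast
qed

lemma card_Mp_join_le_pcap:
  assumes p: "p \<in> projs I"
  shows "card (Mp (join I M M') p) \<le> pcap I p"
proof -
  have "p \<in> offered I (offerer I p)" using p unfolding offered_def by simp
  then show ?thesis
    using card_Mp_join_le_lecturer[OF valid_spa_offerer[OF valid p]]
      matching_pcap[OF matching p] matching_pcap[OF matching' p] by fastforce
qed

lemma card_Ml_join_le_lcap:
  assumes l: "l \<in> lecs I"
  shows "card (Ml I (join I M M') l) \<le> lcap I l"
proof -
  have "\<And>s p. (s,p) \<in> join I M M' \<Longrightarrow> p \<in> projs I"
    using join_subset acceptableD(3)[OF valid]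
      matching_acceptable[OF matching] matching_acceptable[OF matching'] by blast
  then have "card (Ml I (join I M M') l) \<le> (\<Sum>q\<in>offered I l. card (Mp (join I M M') q))"
    using Ml_eq_UN_Mp card_UN_le[OF finite_offered[OF valid]] by metis
  moreover have "(\<Sum>q\<in>offered I l. card (Mp (join I M M') q)) \<le> card (Ml I M l) \<or>
      (\<Sum>q\<in>offered I l. card (Mp (join I M M') q)) \<le> card (Ml I M' l)"
    unfolding matching_card_Ml[OF valid matching] matching_card_Ml[OF valid matching']
    using card_Mp_join_le_lecturer[OF l] sum_mono by (metis (no_types, lifting))
  ultimately show ?thesis
    using matching_lcap[OF matching l] matching_lcap[OF matching' l] by linarith
qed

end

theorem lemma11:
  assumes "valid_spa I" and "stable I M" and "stable I M'"
  shows "is_matching I (join I M M')"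
proof -
  interpret two_stable_matchings I M M' using assms by unfold_locales
  have "\<forall>(s,p)\<in>join I M M'. acceptable I s p"
    using join_subset matching_acceptable[OF matching] matching_acceptable[OF matching'] by blast
  then show ?thesis
    unfolding is_matching_def using join_unique card_Mp_join_le_pcap card_Ml_join_le_lcap by blast
qed

end
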